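(* Let $M$ be a rank-$3$ matroid on $[n]$ with no circuits of size $3$. Let $P_1,\dots,P_k$ be the distinct parallel classes of $M$ having more than one element, and let $N$ be the set of non-loop elements that are not parallel to any other element. Then $M$ is DJS if and only if $$\left\lfloor\tfrac{|P_1|}{2}\right\rfloor+\cdots+\left\lfloor\tfrac{|P_k|}{2}\right\rfloor-k<|N|-2.$$
   Context: A rank-$3$ matroid $M$ on $[n]$ is called DJS if, letting $E$ be the set of non-loop elements of $M$, every linear ordering $w_1w_2\cdots w_m$ of $E$ has three consecutive elements $\{w_j,w_{j+1},w_{j+2}\}$ forming a basis of $M$. *)

theory Defs
  imports Main
begin

definition matroid :: "nat \<Rightarrow> nat set set \<Rightarrow> bool" where
  "matroid n I \<longleftrightarrow>
     (\<forall>X\<in>I. X \<subseteq> {1..n}) \<and>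
     {} \<in> I \<and>
     (\<forall>X Y. Y \<in> I \<longrightarrow> X \<subseteq> Y \<longrightarrow> X \<in> I) \<and>
     (\<forall>X Y. X \<in> I \<longrightarrow> Y \<in> I \<longrightarrow> card X < card Y \<longrightarrow>
        (\<exists>y\<in>Y - X. insert y X \<in> I))"

definition mrank :: "nat set set \<Rightarrow> nat" where
  "mrank I = Max (card ` I)"

definition basis :: "nat set set \<Rightarrow> nat set \<Rightarrow> bool" where
  "basis I B \<longleftrightarrow> B \<in> I \<and> (\<forall>X\<in>I. B \<subseteq> X \<longrightarrow> X = B)"

definition circuit :: "nat \<Rightarrow> nat set set \<Rightarrow> nat set \<Rightarrow> bool" where
  "circuit n I C \<longleftrightarrow> C \<subseteq> {1..n} \<and> C \<notin> I \<and> (\<forall>X. X \<subset> C \<longrightarrow> X \<in> I)"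

definition loop :: "nat \<Rightarrow> nat set set \<Rightarrow> nat \<Rightarrow> bool" where
  "loop n I e \<longleftrightarrow> e \<in> {1..n} \<and> {e} \<notin> I"

definition nonloops :: "nat \<Rightarrow> nat set set \<Rightarrow> nat set" where
  "nonloops n I = {e \<in> {1..n}. {e} \<in> I}"

definition parallel :: "nat \<Rightarrow> nat set set \<Rightarrow> nat \<Rightarrow> nat \<Rightarrow> bool" where
  "parallel n I e f \<longleftrightarrow> e \<in> nonloops n I \<and> f \<in> nonloops n I \<and> e \<noteq> f \<and> {e, f} \<notin> I"

definition parallel_class :: "nat \<Rightarrow> nat set set \<Rightarrow> nat \<Rightarrow> nat set" where
  "parallel_class n I e = {f \<in> nonloops n I. f = e \<or> parallel n I e f}"

definition big_parallel_classes :: "nat \<Rightarrow> nat set set \<Rightarrow> nat set set" where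
  "big_parallel_classes n I =
     {P. \<exists>e\<in>nonloops n I. P = parallel_class n I e \<and> card P > 1}"

definition simple_elems :: "nat \<Rightarrow> nat set set \<Rightarrow> nat set" where
  "simple_elems n I = {e \<in> nonloops n I. \<not> (\<exists>f. parallel n I e f)}"

definition DJS :: "nat \<Rightarrow> nat set set \<Rightarrow> bool" where
  "DJS n I \<longleftrightarrow>
     (\<forall>w. distinct w \<and> set w = nonloops n I \<longrightarrow>
        (\<exists>j. j + 2 < length w \<and> basis I {w ! j, w ! (j + 1), w ! (j + 2)}))"

end

theory Submission
  imports Defs
begin

text \<open>
  Colour every non-loop by its parallel class. With rank 3 and no 3-circuits, three distinct
  non-loops form a basis exactly when their colours are pairwise distinct, so \<open>M\<close> fails to be
  DJS iff the non-loops can be listed without a rainbow window, i.e. without three consecutive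
  elements of pairwise distinct colours. Such a listing exists iff the surplus
  \<open>2 + (\<Sum>a. m\<^sub>a div 2 - 1)\<close> over the colour classes (of sizes \<open>m\<^sub>a\<close>) is nonnegative;
  since classes of size 1 contribute \<open>-1\<close> each, the surplus is negative exactly when the
  stated inequality holds.

  For sufficiency, a class of size \<open>m\<close>, laid out as \<open>a a t a a t \<dots> a a\<close>, absorbs
  \<open>m div 2 - 1\<close> elements \<open>t\<close> of other colours, and one more element fits at either end of
  the concatenated blocks. For necessity, build a valid listing from the back: prepending
  an element of a new colour costs one unit of surplus, and an element of an old colour costs
  nothing. A listing of surplus 0 must start with two differently coloured elements, so prepending
  a new colour to it would create a rainbow window; keeping track of the parity of the first
  colour's multiplicity shows that tight listings indeed have this shape.
\<close>

section \<open>Colourings without rainbow windows\<close>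

fun no_rainbow_window :: "'b list \<Rightarrow> bool" where
  "no_rainbow_window (x # y # z # r) \<longleftrightarrow>
     (x = y \<or> y = z \<or> x = z) \<and> no_rainbow_window (y # z # r)"
| "no_rainbow_window _ \<longleftrightarrow> True"

lemma no_rainbow_window_iff_nth:
  "no_rainbow_window xs \<longleftrightarrow> (\<forall>j. j + 2 < length xs \<longrightarrow>
     xs ! j = xs ! (j + 1) \<or> xs ! (j + 1) = xs ! (j + 2) \<or> xs ! j = xs ! (j + 2))"
proof (induction xs rule: no_rainbow_window.induct)
  case (1 x y z r)
  have split_nat: "(\<forall>j. P j) \<longleftrightarrow> P 0 \<and> (\<forall>j. P (Suc j))" for P :: "nat \<Rightarrow> bool"
    by (metis not0_implies_Suc)
  show ?case
    by (subst split_nat) (simp add: 1)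
qed auto

lemma no_rainbow_window_Cons_same [simp]:
  "no_rainbow_window (x # x # r) \<longleftrightarrow> no_rainbow_window (x # r)"
  by (cases r) auto

lemma no_rainbow_window_ConsD: "no_rainbow_window (x # xs) \<Longrightarrow> no_rainbow_window xs"
  by (cases xs rule: no_rainbow_window.cases) auto

lemma no_rainbow_window_short: "length xs \<le> 2 \<Longrightarrow> no_rainbow_window xs"
  by (cases xs rule: no_rainbow_window.cases) auto

lemma no_rainbow_window_replicate_append:
  "no_rainbow_window (a # r) \<Longrightarrow> no_rainbow_window (replicate m a @ a # r)"
  by (induction m) (simp_all add: replicate_app_Cons_same)

lemma no_rainbow_window_monochrome_append:
  assumes "as \<noteq> []" and "\<forall>y\<in>set as. c y = a" and "no_rainbow_window (a # r)"
  shows "no_rainbow_window (map c as @ r)"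
proof -
  have "map c as = replicate (length as) a"
    using assms(2) by (induction as) auto
  then have "map c as @ r = replicate (length as - 1) a @ a # r"
    using assms(1) by (cases as) (simp_all add: replicate_app_Cons_same)
  then show ?thesis
    using no_rainbow_window_replicate_append[OF assms(3)] by simp
qed

definition colour_count :: "('a \<Rightarrow> 'b) \<Rightarrow> 'a set \<Rightarrow> 'b \<Rightarrow> nat" where
  "colour_count c S a = card {x \<in> S. c x = a}"

definition surplus :: "('a \<Rightarrow> 'b) \<Rightarrow> 'a set \<Rightarrow> int" where
  "surplus c S = (\<Sum>a\<in>c ` S. int (colour_count c S a div 2) - 1) + 2"

definition repeated_colours :: "('a \<Rightarrow> 'b) \<Rightarrow> 'a set \<Rightarrow> 'b set" where
  "repeated_colours c S = {a \<in> c ` S. 1 < colour_count c S a}"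

definition singly_coloured :: "('a \<Rightarrow> 'b) \<Rightarrow> 'a set \<Rightarrow> 'a set" where
  "singly_coloured c S = {x \<in> S. colour_count c S (c x) = 1}"

lemma colour_count_pos: "finite S \<Longrightarrow> x \<in> S \<Longrightarrow> 0 < colour_count c S (c x)"
  by (auto simp: colour_count_def card_gt_0_iff)

lemma colour_count_eq_0: "a \<notin> c ` S \<Longrightarrow> colour_count c S a = 0"
  unfolding colour_count_def by (metis (mono_tags, lifting) card.empty empty_Collect_eq image_eqI)

lemma colour_count_insert:
  assumes "finite S" and "x \<notin> S"
  shows "colour_count c (insert x S) a = colour_count c S a + (if c x = a then 1 else 0)"
proof -
  have "{y \<in> insert x S. c y = a} = (if c x = a then insert x {y \<in> S. c y = a} else {y \<in> S. c y = a})"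
    by auto
  then show ?thesis
    using assms by (simp add: colour_count_def)
qed

lemma surplus_empty [simp]: "surplus c {} = 2"
  by (simp add: surplus_def)

lemma surplus_insert_new_colour:
  assumes "finite S" and "c x \<notin> c ` S"
  shows "surplus c (insert x S) = surplus c S - 1"
proof -
  have x: "x \<notin> S"
    using assms(2) by auto
  have "colour_count c (insert x S) (c x) = 1"
    using colour_count_insert[OF assms(1) x, of c] colour_count_eq_0[OF assms(2)] by simp
  moreover have "colour_count c (insert x S) a = colour_count c S a" if "a \<in> c ` S" for a
    using colour_count_insert[OF assms(1) x, of c] assms(2) that by auto
  ultimately show ?thesis
    using assms by (simp add: surplus_def)
qed

lemma surplus_insert_old_colour:
  assumes "finite S" and "x \<notin> S" and "c x \<in> c ` S"
  shows "surplus c (insert x S) = surplus c S + (if odd (colour_count c S (c x)) then 1 else 0)"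
proof -
  define d :: int where "d = (if odd (colour_count c S (c x)) then 1 else 0)"
  have pointwise: "int (colour_count c (insert x S) a div 2) - 1 =
      (int (colour_count c S a div 2) - 1) + (if a = c x then d else 0)" for a
    using colour_count_insert[OF assms(1,2), of c a] by (auto simp: d_def elim!: oddE)
  have "(\<Sum>a\<in>c ` S. int (colour_count c (insert x S) a div 2) - 1) =
      (\<Sum>a\<in>c ` S. (int (colour_count c S a div 2) - 1) + (if a = c x then d else 0))"
    unfolding pointwise ..
  also have "\<dots> = (\<Sum>a\<in>c ` S. int (colour_count c S a div 2) - 1) + d"
    using assms(1,3) by (simp only: sum.distrib) simp
  moreover have "c ` insert x S = c ` S"
    using assms(3) by auto
  ultimately show ?thesis
    by (simp add: surplus_def d_def)
qed

lemma surplus_eq_sum_repeated_colours: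
  assumes "finite S"
  shows "surplus c S = (\<Sum>a\<in>repeated_colours c S. int (colour_count c S a div 2))
    - int (card (repeated_colours c S)) - int (card (singly_coloured c S)) + 2"
proof -
  define B where "B = repeated_colours c S"
  define U where "U = {a \<in> c ` S. colour_count c S a = 1}"
  have "c ` S = B \<union> U" and "B \<inter> U = {}"
    using colour_count_pos[OF assms, of _ c] by (force simp: B_def U_def repeated_colours_def)+
  moreover have "finite B" "finite U"
    using assms by (auto simp: B_def U_def repeated_colours_def)
  ultimately have "(\<Sum>a\<in>c ` S. int (colour_count c S a div 2) - 1)
      = (\<Sum>a\<in>B. int (colour_count c S a div 2) - 1) + (\<Sum>a\<in>U. int (colour_count c S a div 2) - 1)"
    by (simp add: sum.union_disjoint)
  also have "\<dots> = (\<Sum>a\<in>B. int (colour_count c S a div 2)) - int (card B) - int (card U)"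
    by (simp add: sum_subtractf U_def)
  finally have sum_split: "surplus c S =
      (\<Sum>a\<in>B. int (colour_count c S a div 2)) - int (card B) - int (card U) + 2"
    by (simp add: surplus_def)
  have "inj_on c (singly_coloured c S)"
  proof
    fix x y assume xy: "x \<in> singly_coloured c S" "y \<in> singly_coloured c S" "c x = c y"
    then have "card {u \<in> S. c u = c x} = 1"
      by (simp add: singly_coloured_def colour_count_def)
    then obtain z where "{u \<in> S. c u = c x} = {z}"
      by (rule card_1_singletonE)
    moreover have "x \<in> {u \<in> S. c u = c x}" "y \<in> {u \<in> S. c u = c x}"
      using xy by (auto simp: singly_coloured_def)
    ultimately show "x = y"
      by (metis singletonD)
  qed
  moreover have "c ` singly_coloured c S = U"
    by (auto simp: singly_coloured_def U_def)
  ultimately have "card (singly_coloured c S) = card U"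
    using card_image by fastforce
  then show ?thesis
    using sum_split by (simp add: B_def)
qed

lemma surplus_no_rainbow_window:
  assumes "distinct w" and "no_rainbow_window (map c w)"
  shows "0 \<le> surplus c (set w) \<and> (surplus c (set w) = 0 \<longrightarrow>
    (\<exists>x y r. w = x # y # r \<and> c x \<noteq> c y \<and> odd (colour_count c (set w) (c x))))"
  using assms
proof (induction w)
  case Nil
  then show ?case by simp
next
  case (Cons x w)
  have x: "x \<notin> set w" and w: "distinct w" "no_rainbow_window (map c w)"
    using Cons.prems by (auto intro: no_rainbow_window_ConsD)
  note IH = Cons.IH[OF w]
  show ?case
  proof (cases "c x \<in> c ` set w")
    case False
    have "surplus c (set w) \<noteq> 0"
    proof
      assume "surplus c (set w) = 0"
      then obtain y z r where "w = y # z # r" "c y \<noteq> c z"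
        using IH by blast
      then show False
        using Cons.prems(2) False by auto
    qed
    moreover have "surplus c (set (x # w)) = surplus c (set w) - 1"
      using surplus_insert_new_colour[OF _ False] by simp
    moreover have "colour_count c (set (x # w)) (c x) = 1"
      using colour_count_insert[OF _ x, of c "c x"] colour_count_eq_0[OF False] by simp
    moreover have "w \<noteq> []"
      if "surplus c (set (x # w)) = 0"
      using that surplus_insert_new_colour[OF _ False] by auto
    ultimately show ?thesis
      using IH False by (cases w) auto
  next
    case True
    define k where "k = colour_count c (set w) (c x)"
    have surplus_x: "surplus c (set (x # w)) = surplus c (set w) + (if odd k then 1 else 0)"
      using surplus_insert_old_colour[OF _ x True] by (simp add: k_def)
    have count_x: "colour_count c (set (x # w)) (c x) = k + 1"
      using colour_count_insert[OF _ x, of c "c x"] by (simp add: k_def)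
    show ?thesis
    proof (cases "odd k")
      case True
      then show ?thesis
        using surplus_x IH by simp
    next
      case False
      have "c x \<noteq> c y \<and> odd (colour_count c (set (x # w)) (c x))"
        if "w = y # z # r" "odd (colour_count c (set w) (c y))" for y z r
        using that False count_x k_def by auto
      then show ?thesis
        using surplus_x IH False by (cases w) auto
    qed
  qed
qed

section \<open>Construction of an arrangement\<close>

fun weave :: "'a list \<Rightarrow> 'a list \<Rightarrow> 'a list" where
  "weave (a # b # c # d # as) (t # ts) = a # b # t # weave (c # d # as) ts"
| "weave as ts = as @ ts"

lemma set_weave [simp]: "set (weave as ts) = set as \<union> set ts"
  by (induction as ts rule: weave.induct) auto

lemma distinct_weave [simp]: "distinct (weave as ts) \<longleftrightarrow> distinct (as @ ts)"
  by (induction as ts rule: weave.induct) auto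

lemma weave_Cons_Cons: "\<exists>r. weave (x # y # as) ts = x # y # r"
  by (cases "(x # y # as, ts)" rule: weave.cases) auto

lemma no_rainbow_window_weave:
  assumes "2 + 2 * length ts \<le> length as" and "\<forall>y\<in>set as. c y = a"
    and "no_rainbow_window (a # r)"
  shows "no_rainbow_window (map c (weave as ts) @ r)"
  using assms(1,2)
proof (induction ts arbitrary: as)
  case Nil
  then have "as \<noteq> []"
    by auto
  then show ?case
    using no_rainbow_window_monochrome_append[of as c a r] Nil.prems(2) assms(3) by simp
next
  case (Cons t ts)
  then obtain a1 a2 a3 a4 as' where as: "as = a1 # a2 # a3 # a4 # as'"
    by (auto simp: Suc_le_length_iff numeral_eq_Suc)
  obtain r' where "weave (a3 # a4 # as') ts = a3 # a4 # r'"
    using weave_Cons_Cons[of a3 a4 as' ts] by blast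
  moreover have "no_rainbow_window (map c (weave (a3 # a4 # as') ts) @ r)"
    using Cons as by auto
  ultimately show ?case
    using Cons.prems(2) as by simp
qed

fun arrange :: "'a list list \<Rightarrow> 'a list \<Rightarrow> 'a list" where
  "arrange [] ts = ts"
| "arrange (as # ass) ts =
     weave as (take (length as div 2 - 1) ts) @ arrange ass (drop (length as div 2 - 1) ts)"

definition capacity :: "'a list list \<Rightarrow> nat" where
  "capacity ass = (\<Sum>as\<leftarrow>ass. length as div 2 - 1)"

lemma set_take_Un_set_drop: "set (take m xs) \<union> set (drop m xs) = set xs"
  by (metis append_take_drop_id set_append)

lemma set_arrange: "set (arrange ass ts) = (\<Union>as\<in>set ass. set as) \<union> set ts"
proof (induction ass arbitrary: ts)
  case (Cons as ass)
  then show ?case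
    using set_take_Un_set_drop[of "length as div 2 - 1" ts] by auto
qed simp

lemma distinct_arrange: "distinct (concat ass @ ts) \<Longrightarrow> distinct (arrange ass ts)"
proof (induction ass arbitrary: ts)
  case (Cons as ass)
  define m where "m = length as div 2 - 1"
  have "set (take m ts) \<inter> set (drop m ts) = {}"
    using Cons.prems by (simp add: set_take_disj_set_drop_if_distinct)
  then have "distinct (as @ take m ts)" "distinct (concat ass @ drop m ts)"
    and "(set as \<union> set (take m ts)) \<inter> ((\<Union>as\<in>set ass. set as) \<union> set (drop m ts)) = {}"
    using Cons.prems by (auto dest: in_set_takeD in_set_dropD)
  then show ?case
    using Cons.IH by (simp add: m_def set_arrange)
qed simp

lemma no_rainbow_window_arrange:
  assumes "ass \<noteq> []" and "\<forall>as\<in>set ass. 2 \<le> length as \<and> (\<forall>y\<in>set as. c y = c (hd as))"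
    and "length ts \<le> capacity ass + 1"
  shows "no_rainbow_window (map c (arrange ass ts)) \<and>
    (\<exists>x y r. arrange ass ts = x # y # r \<and> c x = c y)"
  using assms
proof (induction ass arbitrary: ts)
  case Nil
  then show ?case by simp
next
  case (Cons as ass)
  define m where "m = length as div 2 - 1"
  define a where "a = c (hd as)"
  have as: "2 \<le> length as" "\<forall>y\<in>set as. c y = a"
    using Cons.prems(2) by (auto simp: a_def)
  then have weave_ok: "2 + 2 * length (take m ts) \<le> length as"
    by (auto simp: m_def)
  have rest: "length (drop m ts) \<le> capacity ass + 1"
    using Cons.prems(3) by (auto simp: m_def capacity_def)
  have "no_rainbow_window (a # map c (arrange ass (drop m ts)))"
  proof (cases "ass = []")
    case True
    then show ?thesis
      using rest by (intro no_rainbow_window_short) (simp add: capacity_def)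
  next
    case False
    then obtain y1 y2 r where "arrange ass (drop m ts) = y1 # y2 # r" "c y1 = c y2"
      and "no_rainbow_window (map c (arrange ass (drop m ts)))"
      using Cons.IH[OF False _ rest] Cons.prems(2) by auto
    then show ?thesis
      by simp
  qed
  then have "no_rainbow_window (map c (arrange (as # ass) ts))"
    using no_rainbow_window_weave[OF weave_ok as(2)] by (simp add: m_def)
  moreover obtain x1 x2 as' where as_eq: "as = x1 # x2 # as'"
    using as(1) by (auto simp: Suc_le_length_iff numeral_eq_Suc)
  moreover obtain r where "weave as (take m ts) = x1 # x2 # r"
    using weave_Cons_Cons[of x1 x2 as' "take m ts"] as_eq by blast
  ultimately show ?case
    using as(2) by (auto simp: m_def)
qed

lemma exists_no_rainbow_arrangement_of_blocks:
  assumes "\<forall>as\<in>set ass. 2 \<le> length as \<and> (\<forall>y\<in>set as. c y = c (hd as))"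
    and "distinct (concat ass @ ts)" and "length ts \<le> capacity ass + 2"
  shows "\<exists>w. distinct w \<and> set w = (\<Union>as\<in>set ass. set as) \<union> set ts \<and>
    no_rainbow_window (map c w)"
proof (cases "ass = []")
  case True
  then show ?thesis
    using assms(2,3) no_rainbow_window_short[of "map c ts"] by (auto simp: capacity_def)
next
  case False
  define w where "w = take 1 ts @ arrange ass (drop 1 ts)"
  have "length (drop 1 ts) \<le> capacity ass + 1"
    using assms(3) by simp
  then obtain x y r where "arrange ass (drop 1 ts) = x # y # r" "c x = c y"
    and "no_rainbow_window (map c (arrange ass (drop 1 ts)))"
    using no_rainbow_window_arrange[OF False assms(1)] by blast
  then have "no_rainbow_window (map c w)"
    by (cases ts) (auto simp: w_def)
  moreover have "set w = (\<Union>as\<in>set ass. set as) \<union> set ts"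
    using set_take_Un_set_drop[of 1 ts] by (auto simp: w_def set_arrange)
  moreover have "distinct w"
  proof -
    have "set (take 1 ts) \<inter> set (drop 1 ts) = {}"
      using assms(2) by (simp add: set_take_disj_set_drop_if_distinct)
    then show ?thesis
      using assms(2) distinct_arrange[of ass "drop 1 ts"]
      by (auto simp: w_def set_arrange dest: in_set_takeD in_set_dropD)
  qed
  ultimately show ?thesis
    by blast
qed

lemma capacity_map:
  assumes "distinct xs" and "\<forall>a\<in>set xs. 2 \<le> length (f a)"
  shows "int (capacity (map f xs)) = (\<Sum>a\<in>set xs. int (length (f a) div 2)) - int (length xs)"
proof -
  have "capacity (map f xs) = (\<Sum>a\<in>set xs. length (f a) div 2 - 1)"
    using assms(1) by (simp add: capacity_def comp_def sum_list_distinct_conv_sum_set)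
  moreover have "int (length (f a) div 2 - 1) = int (length (f a) div 2) - 1" if "a \<in> set xs" for a
    using assms(2) that by auto
  ultimately have "int (capacity (map f xs)) = (\<Sum>a\<in>set xs. int (length (f a) div 2) - 1)"
    by simp
  then show ?thesis
    using assms(1) by (simp add: sum_subtractf distinct_card)
qed

lemma colour_blocks:
  assumes "finite S"
  obtains ass where "\<forall>as\<in>set ass. 2 \<le> length as \<and> (\<forall>y\<in>set as. c y = c (hd as))"
    and "distinct (concat ass)" and "set (concat ass) = S - singly_coloured c S"
    and "int (capacity ass) = (\<Sum>a\<in>repeated_colours c S. int (colour_count c S a div 2))
      - int (card (repeated_colours c S))"
proof -
  define B where "B = repeated_colours c S"
  have "finite B"
    using assms by (simp add: B_def repeated_colours_def)
  then obtain colours where colours: "distinct colours" "set colours = B"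
    using finite_distinct_list by blast
  have "\<forall>a. \<exists>xs. set xs = {x \<in> S. c x = a} \<and> distinct xs"
    by (intro allI finite_distinct_list) (simp add: assms)
  then obtain members
    where members: "\<And>a. distinct (members a)" "\<And>a. set (members a) = {x \<in> S. c x = a}"
    by metis
  have length_members: "length (members a) = colour_count c S a" for a
    using members distinct_card by (metis colour_count_def)
  have long: "\<forall>a\<in>set colours. 2 \<le> length (members a)"
    using colours by (auto simp: length_members B_def repeated_colours_def)
  have "\<forall>as\<in>set (map members colours). 2 \<le> length as \<and> (\<forall>y\<in>set as. c y = c (hd as))"
  proof
    fix as assume "as \<in> set (map members colours)"
    then obtain a where "a \<in> set colours" "as = members a"
      by auto
    then have "2 \<le> length as" "\<forall>y\<in>set as. c y = a"
      using long members(2) by auto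
    then show "2 \<le> length as \<and> (\<forall>y\<in>set as. c y = c (hd as))"
      by (metis hd_in_set list.size(3) not_numeral_le_zero)
  qed
  moreover have "inj_on members B"
  proof
    fix a b assume ab: "a \<in> B" "b \<in> B" "members a = members b"
    then obtain x where "x \<in> S" "c x = a"
      by (auto simp: B_def repeated_colours_def)
    then show "a = b"
      using members(2)[of a] members(2)[of b] ab(3) by auto
  qed
  then have "distinct (concat (map members colours))"
    using colours members by (auto simp: distinct_map intro!: distinct_concat)
  moreover have "set (concat (map members colours)) = S - singly_coloured c S"
    using colours members colour_count_pos[OF assms, of _ c]
    by (force simp: B_def repeated_colours_def singly_coloured_def)
  moreover have "int (capacity (map members colours)) =
      (\<Sum>a\<in>B. int (colour_count c S a div 2)) - int (card B)"
    using capacity_map[OF colours(1) long] distinct_card[OF colours(1)] colours(2)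
    by (simp add: length_members)
  ultimately show ?thesis
    using that B_def by blast
qed

lemma exists_no_rainbow_arrangement:
  assumes "finite S" and "0 \<le> surplus c S"
  shows "\<exists>w. distinct w \<and> set w = S \<and> no_rainbow_window (map c w)"
proof -
  obtain ass where blocks: "\<forall>as\<in>set ass. 2 \<le> length as \<and> (\<forall>y\<in>set as. c y = c (hd as))"
    and "distinct (concat ass)" and set_ass: "set (concat ass) = S - singly_coloured c S"
    and capacity: "int (capacity ass) = (\<Sum>a\<in>repeated_colours c S. int (colour_count c S a div 2))
      - int (card (repeated_colours c S))"
    using colour_blocks[OF assms(1)] by blast
  have "finite (singly_coloured c S)"
    using assms(1) by (simp add: singly_coloured_def)
  then obtain ts where ts: "distinct ts" "set ts = singly_coloured c S"
    using finite_distinct_list by blast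
  have "length ts \<le> capacity ass + 2"
    using assms(2) capacity surplus_eq_sum_repeated_colours[OF assms(1), of c] distinct_card[OF ts(1)] ts(2)
    by simp
  moreover have "distinct (concat ass @ ts)"
    using \<open>distinct (concat ass)\<close> set_ass ts by auto
  moreover have "(\<Union>as\<in>set ass. set as) \<union> set ts = S"
    using set_ass ts by (auto simp: singly_coloured_def)
  ultimately show ?thesis
    using exists_no_rainbow_arrangement_of_blocks[OF blocks] by metis
qed

theorem exists_no_rainbow_arrangement_iff:
  assumes "finite S"
  shows "(\<exists>w. distinct w \<and> set w = S \<and> no_rainbow_window (map c w)) \<longleftrightarrow> 0 \<le> surplus c S"
  using exists_no_rainbow_arrangement[OF assms] surplus_no_rainbow_window by blast


section \<open>Rank-3 matroids without 3-circuits\<close>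

lemma matroid_finite: "matroid n I \<Longrightarrow> finite I"
  unfolding matroid_def by (meson Pow_iff finite_Pow_iff finite_atLeastAtMost finite_subset subsetI)

lemma matroid_down_closed: "matroid n I \<Longrightarrow> Y \<in> I \<Longrightarrow> X \<subseteq> Y \<Longrightarrow> X \<in> I"
  unfolding matroid_def by blast

lemma matroid_augment:
  "matroid n I \<Longrightarrow> X \<in> I \<Longrightarrow> Y \<in> I \<Longrightarrow> card X < card Y \<Longrightarrow>
    \<exists>y\<in>Y - X. insert y X \<in> I"
  by (simp add: matroid_def)

lemma basis_if_card_eq_mrank:
  assumes "matroid n I" and "X \<in> I" and "card X = mrank I"
  shows "basis I X"
  unfolding basis_def
proof (intro conjI ballI impI)
  fix Y assume Y: "Y \<in> I" "X \<subseteq> Y"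
  have "finite Y"
    using assms(1) Y(1) unfolding matroid_def by (meson finite_atLeastAtMost finite_subset)
  moreover have "card Y \<le> card X"
    using assms(3) Y(1) matroid_finite[OF assms(1)] by (simp add: mrank_def)
  ultimately show "Y = X"
    using Y(2) card_seteq by blast
qed (fact assms(2))

lemma dependent_pair_trans:
  assumes "matroid n I" and "f \<in> nonloops n I"
    and "{e, f} \<notin> I" and "{f, g} \<notin> I" and "e \<noteq> g"
  shows "{e, g} \<notin> I"
proof
  assume eg: "{e, g} \<in> I"
  have f: "{f} \<in> I"
    using assms(2) by (simp add: nonloops_def)
  then have "e \<noteq> f" "f \<noteq> g"
    using assms(3,4) by auto
  then have "card {f} < card {e, g}"
    using assms(5) by simp
  then obtain y where "y \<in> {e, g} - {f}" "insert y {f} \<in> I"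
    using matroid_augment[OF assms(1) f eg] by blast
  then show False
    using assms(3,4) by (auto simp: insert_commute)
qed

lemma parallel_class_conv:
  "e \<in> nonloops n I \<Longrightarrow> parallel_class n I e = {f \<in> nonloops n I. e = f \<or> {e, f} \<notin> I}"
  by (auto simp: parallel_class_def parallel_def)

lemma parallel_class_eq_iff:
  assumes "matroid n I" and "e \<in> nonloops n I" and "f \<in> nonloops n I"
  shows "parallel_class n I e = parallel_class n I f \<longleftrightarrow> e = f \<or> {e, f} \<notin> I"
proof
  assume "parallel_class n I e = parallel_class n I f"
  then show "e = f \<or> {e, f} \<notin> I"
    using assms(2,3) by (auto simp: parallel_class_conv)
next
  assume "e = f \<or> {e, f} \<notin> I"
  then have "e = g \<or> {e, g} \<notin> I \<longleftrightarrow> f = g \<or> {f, g} \<notin> I" if "g \<in> nonloops n I" for g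
    using dependent_pair_trans[OF assms(1) assms(2), of f g] dependent_pair_trans[OF assms(1) that, of e f]
      dependent_pair_trans[OF assms(1) assms(3), of e g] dependent_pair_trans[OF assms(1) that, of f e]
    by (auto simp: insert_commute)
  then show "parallel_class n I e = parallel_class n I f"
    using assms(2,3) by (auto simp: parallel_class_conv)
qed

lemma independent_triple_iff_pairs:
  assumes "matroid n I" and "\<forall>C. circuit n I C \<longrightarrow> card C \<noteq> 3"
    and "{x, y, z} \<subseteq> {1..n}" and "x \<noteq> y" "y \<noteq> z" "x \<noteq> z"
  shows "{x, y, z} \<in> I \<longleftrightarrow> {x, y} \<in> I \<and> {y, z} \<in> I \<and> {x, z} \<in> I"
proof
  assume xyz: "{x, y, z} \<in> I"
  have "{x, y} \<subseteq> {x, y, z}" "{y, z} \<subseteq> {x, y, z}" "{x, z} \<subseteq> {x, y, z}"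
    by auto
  then show "{x, y} \<in> I \<and> {y, z} \<in> I \<and> {x, z} \<in> I"
    using matroid_down_closed[OF assms(1) xyz] by blast
next
  assume pairs: "{x, y} \<in> I \<and> {y, z} \<in> I \<and> {x, z} \<in> I"
  have "X \<in> I" if "X \<subset> {x, y, z}" for X
  proof -
    have "X \<subseteq> {x, y} \<or> X \<subseteq> {y, z} \<or> X \<subseteq> {x, z}"
      using that by blast
    then show ?thesis
      using pairs by (meson matroid_down_closed[OF assms(1)])
  qed
  moreover have "card {x, y, z} = 3"
    using assms(4-6) by simp
  ultimately show "{x, y, z} \<in> I"
    using assms(2,3) unfolding circuit_def by blast
qed

lemma basis_triple_iff_parallel_classes_distinct:
  assumes "matroid n I" and "mrank I = 3" and "\<forall>C. circuit n I C \<longrightarrow> card C \<noteq> 3"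
    and "x \<in> nonloops n I" "y \<in> nonloops n I" "z \<in> nonloops n I"
    and "x \<noteq> y" "y \<noteq> z" "x \<noteq> z"
  shows "basis I {x, y, z} \<longleftrightarrow> parallel_class n I x \<noteq> parallel_class n I y \<and>
    parallel_class n I y \<noteq> parallel_class n I z \<and> parallel_class n I x \<noteq> parallel_class n I z"
proof -
  have "{x, y, z} \<subseteq> {1..n}"
    using assms(4-6) by (auto simp: nonloops_def)
  then have "{x, y, z} \<in> I \<longleftrightarrow> parallel_class n I x \<noteq> parallel_class n I y \<and>
      parallel_class n I y \<noteq> parallel_class n I z \<and> parallel_class n I x \<noteq> parallel_class n I z"
    using independent_triple_iff_pairs[OF assms(1,3) _ assms(7-9)] assms(4-9)
    by (simp add: parallel_class_eq_iff[OF assms(1)])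
  moreover have "card {x, y, z} = mrank I"
    using assms(2,7-9) by simp
  then have "basis I {x, y, z} \<longleftrightarrow> {x, y, z} \<in> I"
    using basis_if_card_eq_mrank[OF assms(1)] basis_def by blast
  ultimately show ?thesis
    by simp
qed

lemma DJS_iff_no_rainbow_arrangement:
  assumes "matroid n I" and "mrank I = 3" and "\<forall>C. circuit n I C \<longrightarrow> card C \<noteq> 3"
  shows "DJS n I \<longleftrightarrow>
    \<not> (\<exists>w. distinct w \<and> set w = nonloops n I \<and> no_rainbow_window (map (parallel_class n I) w))"
proof -
  let ?c = "parallel_class n I"
  have "(\<exists>j. j + 2 < length w \<and> basis I {w ! j, w ! (j + 1), w ! (j + 2)}) \<longleftrightarrow>
      \<not> no_rainbow_window (map ?c w)"
    if w: "distinct w" "set w = nonloops n I" for w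
  proof -
    have "basis I {w ! j, w ! (j + 1), w ! (j + 2)} \<longleftrightarrow> \<not> (?c (w ! j) = ?c (w ! (j + 1)) \<or>
        ?c (w ! (j + 1)) = ?c (w ! (j + 2)) \<or> ?c (w ! j) = ?c (w ! (j + 2)))"
      if j: "j + 2 < length w" for j
    proof -
      have "w ! j \<in> nonloops n I" "w ! (j + 1) \<in> nonloops n I" "w ! (j + 2) \<in> nonloops n I"
        using j w(2) nth_mem[of j w] nth_mem[of "j + 1" w] nth_mem[of "j + 2" w] by auto
      moreover have "w ! j \<noteq> w ! (j + 1)" "w ! (j + 1) \<noteq> w ! (j + 2)" "w ! j \<noteq> w ! (j + 2)"
        using j w(1) by (simp_all add: nth_eq_iff_index_eq)
      ultimately show ?thesis
        using basis_triple_iff_parallel_classes_distinct[OF assms] by simp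
    qed
    then show ?thesis
      by (auto simp: no_rainbow_window_iff_nth)
  qed
  then show ?thesis
    unfolding DJS_def by blast
qed

lemma finite_nonloops: "finite (nonloops n I)"
  by (simp add: nonloops_def)

lemma parallel_class_self: "e \<in> nonloops n I \<Longrightarrow> e \<in> parallel_class n I e"
  by (simp add: parallel_class_def)

lemma colour_count_parallel_class:
  assumes "matroid n I" and "e \<in> nonloops n I"
  shows "colour_count (parallel_class n I) (nonloops n I) (parallel_class n I e) = card (parallel_class n I e)"
proof -
  have "parallel_class n I f = parallel_class n I e \<longleftrightarrow> f \<in> parallel_class n I e"
    if "f \<in> nonloops n I" for f
    using parallel_class_eq_iff[OF assms(1) that assms(2)] assms(2) that
    by (auto simp: parallel_class_conv insert_commute)
  then have "{f \<in> nonloops n I. parallel_class n I f = parallel_class n I e} =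
      {f \<in> nonloops n I. f \<in> parallel_class n I e}"
    by blast
  also have "\<dots> = parallel_class n I e"
    by (auto simp: parallel_class_def)
  finally show ?thesis
    by (simp add: colour_count_def)
qed

lemma repeated_colours_parallel_class:
  "matroid n I \<Longrightarrow> repeated_colours (parallel_class n I) (nonloops n I) = big_parallel_classes n I"
  by (auto simp: repeated_colours_def big_parallel_classes_def colour_count_parallel_class)

lemma singly_coloured_parallel_class:
  assumes "matroid n I"
  shows "singly_coloured (parallel_class n I) (nonloops n I) = simple_elems n I"
proof -
  have "card (parallel_class n I e) = 1 \<longleftrightarrow> \<not> (\<exists>f. parallel n I e f)"
    if "e \<in> nonloops n I" for e
  proof -
    have "card (parallel_class n I e) = 1 \<longleftrightarrow> parallel_class n I e = {e}"
      using parallel_class_self[OF that] by (auto simp: card_1_singleton_iff)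
    also have "\<dots> \<longleftrightarrow> \<not> (\<exists>f. parallel n I e f)"
      using that by (auto simp: parallel_class_def parallel_def)
    finally show ?thesis .
  qed
  then show ?thesis
    using colour_count_parallel_class[OF assms]
    by (auto simp: singly_coloured_def simple_elems_def)
qed

lemma surplus_parallel_classes:
  assumes "matroid n I"
  shows "surplus (parallel_class n I) (nonloops n I) =
    (\<Sum>P\<in>big_parallel_classes n I. int (card P div 2)) - int (card (big_parallel_classes n I))
      - int (card (simple_elems n I)) + 2"
proof -
  have "colour_count (parallel_class n I) (nonloops n I) P = card P"
    if "P \<in> big_parallel_classes n I" for P
    using that colour_count_parallel_class[OF assms] by (auto simp: big_parallel_classes_def)
  then have "(\<Sum>P\<in>big_parallel_classes n I. int (colour_count (parallel_class n I) (nonloops n I) P div 2))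
      = (\<Sum>P\<in>big_parallel_classes n I. int (card P div 2))"
    by simp
  then show ?thesis
    using surplus_eq_sum_repeated_colours[OF finite_nonloops, of "parallel_class n I" n I]
    by (simp add: repeated_colours_parallel_class[OF assms] singly_coloured_parallel_class[OF assms])
qed

theorem proposition6p7:
  fixes n :: nat and I :: "nat set set"
  assumes "matroid n I"
    and "mrank I = 3"
    and "\<forall>C. circuit n I C \<longrightarrow> card C \<noteq> 3"
  shows "DJS n I \<longleftrightarrow>
    (\<Sum>P\<in>big_parallel_classes n I. int (card P div 2))
      - int (card (big_parallel_classes n I))
      < int (card (simple_elems n I)) - 2"
proof -
  have "DJS n I \<longleftrightarrow>
      \<not> (\<exists>w. distinct w \<and> set w = nonloops n I \<and> no_rainbow_window (map (parallel_class n I) w))"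
    by (rule DJS_iff_no_rainbow_arrangement[OF assms])
  also have "\<dots> \<longleftrightarrow> surplus (parallel_class n I) (nonloops n I) < 0"
    by (simp only: exists_no_rainbow_arrangement_iff[OF finite_nonloops] not_le)
  also have "\<dots> \<longleftrightarrow> (\<Sum>P\<in>big_parallel_classes n I. int (card P div 2))
      - int (card (big_parallel_classes n I)) < int (card (simple_elems n I)) - 2"
    using surplus_parallel_classes[OF assms(1)] by linarith
  finally show ?thesis .
qed

end
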